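(* Let $\alpha\in(1,2)$ and $\beta>0$. Then there is a constant $c\ge1$ depending only on $\alpha$ and $\beta$ such that for all $v\in(0,1)$, $$c^{-1}v^{-\beta}(1-v)^{1-2/\alpha}\le\int_v^1 r^{-\beta}(1-r^\alpha)^{-1/\alpha}(r^\alpha-v^\alpha)^{-1/\alpha}\,dr\le c\,v^{-\beta}(1-v)^{1-2/\alpha}.$$ *)

theory Defs
  imports "HOL-Analysis.Analysis"
begin

end

theory Submission
  imports Defs
begin

(* Write q = 1/alpha, so 1/2 < q < 1. Since r^alpha - v^alpha is comparable to r^(alpha-1) (r - v)
   and 1 - r^alpha to 1 - r, the integrand has the integrable singularities (r - v)^-q at r = v and
   (1 - r)^-q at r = 1. For v >= 1/4 the factor r^-beta is comparable to v^-beta, and the two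
   singularities together contribute the integral of ((1 - r)(r - v))^-q over [v,1], which is of order
   (1 - v)^(1-2q). For v < 1/4 the factor (1 - v)^(1-2/alpha) lies between 1 and 2, and the integral is
   of order v^-beta: from below it dominates the integral of r^(-beta-1), and from above the integrand
   is at most a multiple of v^(q-1-beta) (r - v)^-q on [v,2v], of r^(-beta-1) on [2v,1/2] and of
   (1 - r)^-q on [1/2,1]. *)

lemma has_integral_powr_sub_left:
  fixes a b q :: real
  assumes "a \<le> b" "q < 1"
  shows "((\<lambda>r. (r - a) powr (-q)) has_integral (b - a) powr (1 - q) / (1 - q)) {a..b}"
proof -
  have "((\<lambda>x. x powr (-q)) has_integral (b - a) powr (1 - q) / (1 - q)) {0..b - a}"
    using has_integral_powr_from_0[of "-q" "b - a"] assms by (simp add: add.commute)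
  from has_integral_shift_real_ivl[OF this, of "-a"] show ?thesis by simp
qed

lemma has_integral_powr_sub_right:
  fixes a b q :: real
  assumes "a \<le> b" "q < 1"
  shows "((\<lambda>r. (b - r) powr (-q)) has_integral (b - a) powr (1 - q) / (1 - q)) {a..b}"
proof -
  have "((\<lambda>r. (r - -b) powr (-q)) has_integral (b - a) powr (1 - q) / (1 - q)) {-b..-a}"
    using has_integral_powr_sub_left[of "-b" "-a" q] assms by simp
  from has_integral_reflect_lemma_real[OF this] show ?thesis by simp
qed

lemma has_integral_powr_neg_minus_one:
  fixes a b \<beta> :: real
  assumes "0 < a" "a \<le> b" "0 < \<beta>"
  shows "((\<lambda>r. r powr (-\<beta> - 1)) has_integral (a powr (-\<beta>) - b powr (-\<beta>)) / \<beta>) {a..b}"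
proof -
  have "((\<lambda>r. r powr (-\<beta> - 1)) has_integral (-(b powr (-\<beta>) / \<beta>)) - (-(a powr (-\<beta>) / \<beta>))) {a..b}"
    using assms
    by (intro fundamental_theorem_of_calculus)
       (auto intro!: derivative_eq_intros simp: powr_diff field_simps powr_minus
             simp flip: has_real_derivative_iff_has_vector_derivative)
  then show ?thesis by (simp add: diff_divide_distrib)
qed

lemma integral_le_of_continuous_dominated:
  fixes f g :: "real \<Rightarrow> real"
  assumes "a \<le> b" "continuous_on {a<..<b} f" "(g has_integral G) {a..b}"
    and "\<And>x. x \<in> {a<..<b} \<Longrightarrow> 0 \<le> f x \<and> f x \<le> g x"
  shows "f integrable_on {a..b}" and "integral {a..b} f \<le> G"
proof -
  have g: "g integrable_on {a<..<b}"
    using assms(3) integrable_on_open_interval_real by blast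
  have f: "f integrable_on {a<..<b}"
    by (rule measurable_bounded_by_integrable_imp_integrable_real[OF
          continuous_imp_measurable_on_sets_lebesgue[OF assms(2)] g])
       (use assms(4) in auto)
  then show "f integrable_on {a..b}"
    using integrable_on_open_interval_real by blast
  have "integral {a<..<b} f \<le> integral {a<..<b} g"
    by (rule integral_le[OF f g]) (use assms(4) in auto)
  then show "integral {a..b} f \<le> G"
    using assms(3) integral_open_interval_real integral_unique by metis
qed

lemma integral_ge_of_minorant:
  fixes f h :: "real \<Rightarrow> real"
  assumes "f integrable_on {a..b}" "(h has_integral H) {a..b}"
    and "\<And>x. x \<in> {a<..<b} \<Longrightarrow> h x \<le> f x"
  shows "H \<le> integral {a..b} f"
proof -
  have "integral {a<..<b} h \<le> integral {a<..<b} f"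
    using assms integrable_on_open_interval_real by (intro integral_le) blast+
  then show ?thesis
    using assms(2) integral_open_interval_real integral_unique by metis
qed

lemma integral_combine_le:
  fixes f :: "real \<Rightarrow> real"
  assumes "a \<le> c" "c \<le> b"
    and "f integrable_on {a..c}" "integral {a..c} f \<le> A"
    and "f integrable_on {c..b}" "integral {c..b} f \<le> B"
  shows "f integrable_on {a..b}" and "integral {a..b} f \<le> A + B"
proof -
  show int: "f integrable_on {a..b}"
    using Henstock_Kurzweil_Integration.integrable_combine assms(1,2,3,5) .
  show "integral {a..b} f \<le> A + B"
    using Henstock_Kurzweil_Integration.integral_combine[OF assms(1,2) int] assms(4,6) by linarith
qed

lemma powr_sub_powr_ge:
  fixes \<alpha> v r :: real
  assumes "1 \<le> \<alpha>" "0 < v" "v \<le> r"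
  shows "r powr (\<alpha> - 1) * (r - v) \<le> r powr \<alpha> - v powr \<alpha>"
proof -
  have "v powr (\<alpha> - 1) \<le> r powr (\<alpha> - 1)"
    using assms by (intro powr_mono2) auto
  then have "v powr (\<alpha> - 1) * v \<le> r powr (\<alpha> - 1) * v"
    using assms by (intro mult_right_mono) auto
  moreover have "v powr \<alpha> = v powr (\<alpha> - 1) * v" "r powr \<alpha> = r powr (\<alpha> - 1) * r"
    using assms by (simp_all add: powr_diff)
  ultimately show ?thesis by (simp add: algebra_simps)
qed

lemma powr_sub_powr_le:
  fixes \<alpha> v r :: real
  assumes "1 \<le> \<alpha>" "\<alpha> \<le> 2" "0 < v" "v \<le> r" "r \<le> 1"
  shows "r powr \<alpha> - v powr \<alpha> \<le> 2 * (r - v)"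
proof -
  have r: "0 < r" using assms by simp
  have "r powr \<alpha> * (v / r)^2 = r powr \<alpha> * (v / r) powr 2"
    using assms r by (simp add: powr_numeral)
  also have "\<dots> \<le> r powr \<alpha> * (v / r) powr \<alpha>"
    using assms r by (intro mult_left_mono powr_mono') auto
  also have "\<dots> = v powr \<alpha>"
    using assms r by (simp add: powr_divide)
  finally have "r powr \<alpha> * (v / r)^2 \<le> v powr \<alpha>" .
  then have "r powr \<alpha> - v powr \<alpha> \<le> r powr \<alpha> * ((r - v) * (r + v) / r^2)"
    using r by (simp add: field_simps power2_eq_square)
  also have "\<dots> \<le> r * ((r - v) * (r + v) / r^2)"
    using powr_mono'[of 1 \<alpha> r] assms by (intro mult_right_mono) auto
  also have "\<dots> = (r - v) * ((r + v) / r)"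
    using r by (simp add: field_simps power2_eq_square)
  also have "\<dots> \<le> (r - v) * 2"
    using assms r by (intro mult_left_mono) (auto simp: field_simps)
  finally show ?thesis by simp
qed

lemma mult_powr_neg_le_sum:
  fixes x y q :: real
  assumes "0 < x" "0 < y" "0 \<le> q"
  shows "(x * y) powr (-q) \<le> ((x + y) / 2) powr (-q) * (x powr (-q) + y powr (-q))"
proof -
  define m where "m = ((x + y) / 2) powr (-q)"
  have key: "(s * t) powr (-q) \<le> m * s powr (-q)"
    if "0 < s" "s \<le> t" "s + t = x + y" for s t :: real
  proof -
    have "t powr (-q) \<le> m"
      unfolding m_def using that assms by (intro powr_mono2') auto
    then have "s powr (-q) * t powr (-q) \<le> s powr (-q) * m"
      by (rule mult_left_mono) simp
    then show ?thesis
      using that by (simp add: powr_mult mult.commute)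
  qed
  have "(x * y) powr (-q) \<le> m * x powr (-q) \<or> (x * y) powr (-q) \<le> m * y powr (-q)"
  proof (cases "x \<le> y")
    case True
    then show ?thesis using key[of x y] assms by simp
  next
    case False
    then show ?thesis using key[of y x] assms by (simp add: mult.commute[of y x])
  qed
  moreover have "m * x powr (-q) \<le> m * (x powr (-q) + y powr (-q))"
    and "m * y powr (-q) \<le> m * (x powr (-q) + y powr (-q))"
    by (simp_all add: m_def mult_left_mono)
  ultimately show ?thesis
    unfolding m_def by linarith
qed

(* At r = v and r = 1 one factor is 0 powr (-1/alpha) = 0, so the kernel vanishes there instead of
   blowing up; this is why all pointwise comparisons are made on open intervals. *)
definition kernel :: "real \<Rightarrow> real \<Rightarrow> real \<Rightarrow> real \<Rightarrow> real" where
  "kernel \<alpha> \<beta> v r =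
     r powr (-\<beta>) * (1 - r powr \<alpha>) powr (-1/\<alpha>) * (r powr \<alpha> - v powr \<alpha>) powr (-1/\<alpha>)"

definition weight :: "real \<Rightarrow> real \<Rightarrow> real \<Rightarrow> real" where
  "weight \<alpha> \<beta> v = v powr (-\<beta>) * (1 - v) powr (1 - 2/\<alpha>)"

definition kernel_integral_between :: "real \<Rightarrow> real \<Rightarrow> real \<Rightarrow> real \<Rightarrow> real \<Rightarrow> bool" where
  "kernel_integral_between \<alpha> \<beta> L U v \<longleftrightarrow>
     kernel \<alpha> \<beta> v integrable_on {v..1} \<and>
     L * weight \<alpha> \<beta> v \<le> integral {v..1} (kernel \<alpha> \<beta> v) \<and>
     integral {v..1} (kernel \<alpha> \<beta> v) \<le> U * weight \<alpha> \<beta> v"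

lemma kernel_integral_between_mono:
  assumes "kernel_integral_between \<alpha> \<beta> L U v" "L' \<le> L" "U \<le> U'"
  shows "kernel_integral_between \<alpha> \<beta> L' U' v"
proof -
  have "0 \<le> weight \<alpha> \<beta> v"
    by (simp add: weight_def)
  then have "L' * weight \<alpha> \<beta> v \<le> L * weight \<alpha> \<beta> v" "U * weight \<alpha> \<beta> v \<le> U' * weight \<alpha> \<beta> v"
    using assms(2,3) by (simp_all add: mult_right_mono)
  then show ?thesis
    using assms(1) unfolding kernel_integral_between_def by linarith
qed

lemma kernel_nonneg: "0 \<le> kernel \<alpha> \<beta> v r"
  by (simp add: kernel_def)

lemma kernel_factors_pos:
  fixes \<alpha> v r :: real
  assumes "0 < \<alpha>" "0 \<le> v" "v < r" "r < 1"
  shows "0 < 1 - r powr \<alpha>" and "0 < r powr \<alpha> - v powr \<alpha>"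
  using assms powr_less_mono2[of \<alpha> r 1] powr_less_mono2[of \<alpha> v r] by auto

lemma continuous_on_kernel:
  assumes "0 < \<alpha>" "0 \<le> v" "v \<le> a" "b \<le> 1"
  shows "continuous_on {a<..<b} (kernel \<alpha> \<beta> v)"
proof -
  have "r \<noteq> 0 \<and> 1 - r powr \<alpha> \<noteq> 0 \<and> r powr \<alpha> - v powr \<alpha> \<noteq> 0" if "r \<in> {a<..<b}" for r
    using kernel_factors_pos[of \<alpha> v r] assms that by auto
  then show ?thesis
    unfolding kernel_def by (intro continuous_intros) auto
qed

lemma kernel_le_factorwise:
  assumes "0 < \<alpha>" "r powr (-\<beta>) \<le> A"
    and "0 < B" "B \<le> 1 - r powr \<alpha>" and "0 < C" "C \<le> r powr \<alpha> - v powr \<alpha>"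
  shows "kernel \<alpha> \<beta> v r \<le> A * B powr (-1/\<alpha>) * C powr (-1/\<alpha>)"
proof -
  have "(1 - r powr \<alpha>) powr (-1/\<alpha>) \<le> B powr (-1/\<alpha>)"
    and "(r powr \<alpha> - v powr \<alpha>) powr (-1/\<alpha>) \<le> C powr (-1/\<alpha>)"
    using assms by (auto intro!: powr_mono2')
  moreover have "0 \<le> A"
    using order_trans[OF powr_ge_zero assms(2)] .
  ultimately show ?thesis
    unfolding kernel_def using assms(2) by (intro mult_mono) auto
qed

lemma kernel_ge_factorwise:
  assumes "0 < \<alpha>" "0 \<le> A" "A \<le> r powr (-\<beta>)"
    and "0 < 1 - r powr \<alpha>" "1 - r powr \<alpha> \<le> B"
    and "0 < r powr \<alpha> - v powr \<alpha>" "r powr \<alpha> - v powr \<alpha> \<le> C"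
  shows "A * B powr (-1/\<alpha>) * C powr (-1/\<alpha>) \<le> kernel \<alpha> \<beta> v r"
proof -
  have "B powr (-1/\<alpha>) \<le> (1 - r powr \<alpha>) powr (-1/\<alpha>)"
    and "C powr (-1/\<alpha>) \<le> (r powr \<alpha> - v powr \<alpha>) powr (-1/\<alpha>)"
    using assms by (auto intro!: powr_mono2')
  then show ?thesis
    unfolding kernel_def using assms(2,3) by (intro mult_mono) auto
qed

lemma weight_eq:
  assumes "v < 1"
  shows "weight \<alpha> \<beta> v = v powr (-\<beta>) * ((1 - v) powr (- (1/\<alpha>)) * (1 - v) powr (1 - 1/\<alpha>))"
  unfolding weight_def by (simp add: powr_add[symmetric] diff_divide_distrib)

lemma kernel_le_on_v_2v:
  fixes \<alpha> \<beta> v r :: real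
  assumes "1 < \<alpha>" "0 \<le> \<beta>" "0 < v" "v \<le> 1/4" "v < r" "r < 2 * v"
  defines "q \<equiv> 1/\<alpha>"
  shows "kernel \<alpha> \<beta> v r \<le> v powr (-\<beta>) * 2 powr q * v powr (q - 1) * (r - v) powr (-q)"
proof -
  have q: "-1/\<alpha> = -q" "(\<alpha> - 1) * -q = q - 1"
    using assms by (auto simp: q_def field_simps)
  have "v powr (\<alpha> - 1) * (r - v) \<le> r powr (\<alpha> - 1) * (r - v)"
    using assms by (intro mult_right_mono powr_mono2) auto
  also have "\<dots> \<le> r powr \<alpha> - v powr \<alpha>"
    using powr_sub_powr_ge[of \<alpha> v r] assms by simp
  finally have C: "v powr (\<alpha> - 1) * (r - v) \<le> r powr \<alpha> - v powr \<alpha>" .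
  have B: "1/2 \<le> 1 - r powr \<alpha>"
    using powr_sub_powr_ge[of \<alpha> r 1] assms by simp
  have "kernel \<alpha> \<beta> v r \<le> v powr (-\<beta>) * (1/2) powr (-1/\<alpha>) * (v powr (\<alpha> - 1) * (r - v)) powr (-1/\<alpha>)"
    using assms B C by (intro kernel_le_factorwise powr_mono2') auto
  also have "\<dots> = v powr (-\<beta>) * 2 powr q * v powr (q - 1) * (r - v) powr (-q)"
    unfolding q(1) powr_mult powr_powr q(2) by (simp add: powr_divide divide_powr_uminus)
  finally show ?thesis .
qed

lemma kernel_le_on_2v_half:
  fixes \<alpha> \<beta> v r :: real
  assumes "1 < \<alpha>" "0 < v" "2 * v < r" "r < 1/2"
  defines "q \<equiv> 1/\<alpha>"
  shows "kernel \<alpha> \<beta> v r \<le> 2 powr q * 2 powr q * r powr (-\<beta> - 1)"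
proof -
  have q: "-1/\<alpha> = -q" "\<alpha> * -q = -1"
    using assms by (auto simp: q_def field_simps)
  have "v powr \<alpha> \<le> (r/2) powr \<alpha>"
    using assms by (intro powr_mono2) auto
  also have "\<dots> = r powr \<alpha> * (1/2) powr \<alpha>"
    by (simp add: powr_divide)
  also have "\<dots> \<le> r powr \<alpha> * (1/2) powr 1"
    using assms by (intro mult_left_mono powr_mono') auto
  finally have C: "r powr \<alpha> / 2 \<le> r powr \<alpha> - v powr \<alpha>"
    by simp
  have B: "1/2 \<le> 1 - r powr \<alpha>"
    using powr_sub_powr_ge[of \<alpha> r 1] assms by simp
  have "kernel \<alpha> \<beta> v r \<le> r powr (-\<beta>) * (1/2) powr (-1/\<alpha>) * (r powr \<alpha> / 2) powr (-1/\<alpha>)"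
    using assms B C by (intro kernel_le_factorwise) auto
  also have "\<dots> = 2 powr q * 2 powr q * r powr (-\<beta> - 1)"
    unfolding q(1) powr_divide powr_powr q(2) diff_conv_add_uminus powr_add
    by (simp add: divide_powr_uminus mult_ac)
  finally show ?thesis .
qed

lemma kernel_le_on_half_1:
  fixes \<alpha> \<beta> v r :: real
  assumes "1 < \<alpha>" "\<alpha> \<le> 2" "0 \<le> \<beta>" "0 < v" "v \<le> 1/4" "1/2 < r" "r < 1"
  defines "q \<equiv> 1/\<alpha>"
  shows "kernel \<alpha> \<beta> v r \<le> 2 powr \<beta> * 8 powr q * (1 - r) powr (-q)"
proof -
  have "r powr 1 \<le> r powr (\<alpha> - 1)"
    using assms by (intro powr_mono') auto
  then have "1/2 * (1/4) \<le> r powr (\<alpha> - 1) * (r - v)"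
    using assms by (intro mult_mono) auto
  also have "\<dots> \<le> r powr \<alpha> - v powr \<alpha>"
    using powr_sub_powr_ge[of \<alpha> v r] assms by simp
  finally have C: "1/8 \<le> r powr \<alpha> - v powr \<alpha>"
    by simp
  have "kernel \<alpha> \<beta> v r \<le> (1/2) powr (-\<beta>) * (1 - r) powr (-1/\<alpha>) * (1/8) powr (-1/\<alpha>)"
    using assms C powr_sub_powr_ge[of \<alpha> r 1] by (intro kernel_le_factorwise powr_mono2') auto
  also have "\<dots> = 2 powr \<beta> * 8 powr q * (1 - r) powr (-q)"
    unfolding q_def by (simp add: powr_divide divide_powr_uminus)
  finally show ?thesis .
qed

lemma kernel_le_large_v:
  fixes \<alpha> \<beta> v r :: real
  assumes "1 < \<alpha>" "\<alpha> \<le> 2" "0 \<le> \<beta>" "1/4 \<le> v" "v < r" "r < 1"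
  defines "q \<equiv> 1/\<alpha>"
  shows "kernel \<alpha> \<beta> v r \<le> v powr (-\<beta>) * 4 powr q * ((1 - r) * (r - v)) powr (-q)"
proof -
  have "r powr 1 \<le> r powr (\<alpha> - 1)"
    using assms by (intro powr_mono') auto
  then have "1/4 * (r - v) \<le> r powr (\<alpha> - 1) * (r - v)"
    using assms by (intro mult_right_mono) auto
  also have "\<dots> \<le> r powr \<alpha> - v powr \<alpha>"
    using powr_sub_powr_ge[of \<alpha> v r] assms by simp
  finally have "(r - v) / 4 \<le> r powr \<alpha> - v powr \<alpha>"
    by simp
  then have "kernel \<alpha> \<beta> v r \<le> v powr (-\<beta>) * (1 - r) powr (-1/\<alpha>) * ((r - v) / 4) powr (-1/\<alpha>)"
    by (intro kernel_le_factorwise powr_mono2') (use assms powr_sub_powr_ge[of \<alpha> r 1] in auto)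
  also have "\<dots> = v powr (-\<beta>) * 4 powr q * ((1 - r) * (r - v)) powr (-q)"
    unfolding q_def by (simp add: powr_mult powr_divide divide_powr_uminus mult_ac)
  finally show ?thesis .
qed

lemma kernel_ge_large_v:
  fixes \<alpha> \<beta> v r :: real
  assumes "1 < \<alpha>" "\<alpha> \<le> 2" "0 \<le> \<beta>" "1/4 \<le> v" "v < r" "r < 1"
  defines "q \<equiv> 1/\<alpha>"
  shows "(4 * v) powr (-\<beta>) * (2 * (1 - v)) powr (-q) * 2 powr (-q) * (r - v) powr (-q) \<le> kernel \<alpha> \<beta> v r"
proof -
  have "(4 * v) powr (-\<beta>) \<le> r powr (-\<beta>)"
    using assms by (intro powr_mono2') auto
  then have "(4 * v) powr (-\<beta>) * (2 * (1 - v)) powr (-1/\<alpha>) * (2 * (r - v)) powr (-1/\<alpha>) \<le> kernel \<alpha> \<beta> v r"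
    by (intro kernel_ge_factorwise)
       (use assms kernel_factors_pos[of \<alpha> v r] powr_sub_powr_le[of \<alpha> r 1] powr_sub_powr_le[of \<alpha> v r] in auto)
  then show ?thesis
    unfolding q_def powr_mult[of 2 "r - v"] by (simp add: mult_ac)
qed

lemma powr_neg_minus_one_le_kernel:
  fixes \<alpha> \<beta> v r :: real
  assumes "0 < \<alpha>" "0 \<le> v" "v < r" "r < 1"
  shows "r powr (-\<beta> - 1) \<le> kernel \<alpha> \<beta> v r"
proof -
  have "\<alpha> * (-1/\<alpha>) = -1"
    using assms by simp
  then have "r powr (-\<beta> - 1) = r powr (-\<beta>) * 1 powr (-1/\<alpha>) * (r powr \<alpha>) powr (-1/\<alpha>)"
    unfolding powr_powr diff_conv_add_uminus powr_add by simp
  also have "\<dots> \<le> kernel \<alpha> \<beta> v r"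
    by (intro kernel_ge_factorwise) (use assms kernel_factors_pos[of \<alpha> v r] in auto)
  finally show ?thesis .
qed

lemma kernel_integral_le_on_v_2v:
  fixes \<alpha> \<beta> v :: real
  assumes "1 < \<alpha>" "0 \<le> \<beta>" "0 < v" "v \<le> 1/4"
  defines "q \<equiv> 1/\<alpha>"
  shows "kernel \<alpha> \<beta> v integrable_on {v..2 * v}"
    and "integral {v..2 * v} (kernel \<alpha> \<beta> v) \<le> 2 powr q / (1 - q) * v powr (-\<beta>)"
proof -
  have q: "q < 1"
    using assms by (simp add: q_def)
  define K where "K = v powr (-\<beta>) * 2 powr q * v powr (q - 1)"
  have K_int: "((\<lambda>r. K * (r - v) powr (-q)) has_integral K * (v powr (1 - q) / (1 - q))) {v..2 * v}"
    using has_integral_mult_right[OF has_integral_powr_sub_left[of v "2 * v" q]] assms q by simp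
  have "0 \<le> kernel \<alpha> \<beta> v r \<and> kernel \<alpha> \<beta> v r \<le> K * (r - v) powr (-q)" if "r \<in> {v<..<2 * v}" for r
    using kernel_le_on_v_2v[of \<alpha> \<beta> v r] kernel_nonneg assms that unfolding K_def q_def by auto
  then have int: "kernel \<alpha> \<beta> v integrable_on {v..2 * v}"
    and bound: "integral {v..2 * v} (kernel \<alpha> \<beta> v) \<le> K * (v powr (1 - q) / (1 - q))"
    using integral_le_of_continuous_dominated[OF _ continuous_on_kernel K_int] assms by auto
  show "kernel \<alpha> \<beta> v integrable_on {v..2 * v}"
    by (fact int)
  have "K * (v powr (1 - q) / (1 - q)) = 2 powr q / (1 - q) * v powr (-\<beta>)"
    unfolding K_def using assms by (simp add: powr_add[symmetric])
  with bound show "integral {v..2 * v} (kernel \<alpha> \<beta> v) \<le> 2 powr q / (1 - q) * v powr (-\<beta>)"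
    by linarith
qed

lemma kernel_integral_le_on_2v_half:
  fixes \<alpha> \<beta> v :: real
  assumes "1 < \<alpha>" "0 < \<beta>" "0 < v" "v \<le> 1/4"
  defines "q \<equiv> 1/\<alpha>"
  shows "kernel \<alpha> \<beta> v integrable_on {2 * v..1/2}"
    and "integral {2 * v..1/2} (kernel \<alpha> \<beta> v) \<le> 2 powr q * 2 powr q / \<beta> * v powr (-\<beta>)"
proof -
  define K where "K = 2 powr q * 2 powr q"
  have K_int: "((\<lambda>r. K * r powr (-\<beta> - 1)) has_integral K * (((2 * v) powr (-\<beta>) - (1/2) powr (-\<beta>)) / \<beta>)) {2 * v..1/2}"
    using has_integral_mult_right[OF has_integral_powr_neg_minus_one[of "2 * v" "1/2" \<beta>]] assms by simp
  have "0 \<le> kernel \<alpha> \<beta> v r \<and> kernel \<alpha> \<beta> v r \<le> K * r powr (-\<beta> - 1)" if "r \<in> {2 * v<..<1/2}" for r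
    using kernel_le_on_2v_half[of \<alpha> v r \<beta>] kernel_nonneg assms that unfolding K_def q_def by auto
  then have int: "kernel \<alpha> \<beta> v integrable_on {2 * v..1/2}"
    and bound: "integral {2 * v..1/2} (kernel \<alpha> \<beta> v) \<le> K * (((2 * v) powr (-\<beta>) - (1/2) powr (-\<beta>)) / \<beta>)"
    using integral_le_of_continuous_dominated[OF _ continuous_on_kernel K_int] assms by auto
  show "kernel \<alpha> \<beta> v integrable_on {2 * v..1/2}"
    by (fact int)
  have "(2 * v) powr (-\<beta>) \<le> v powr (-\<beta>)"
    using assms by (intro powr_mono2') auto
  then have "(2 * v) powr (-\<beta>) - (1/2) powr (-\<beta>) \<le> v powr (-\<beta>)"
    using powr_ge_zero[of "1/2" "-\<beta>"] by linarith
  then have "((2 * v) powr (-\<beta>) - (1/2) powr (-\<beta>)) / \<beta> \<le> v powr (-\<beta>) / \<beta>"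
    using assms by (intro divide_right_mono) auto
  then have "K * (((2 * v) powr (-\<beta>) - (1/2) powr (-\<beta>)) / \<beta>) \<le> K * (v powr (-\<beta>) / \<beta>)"
    by (rule mult_left_mono) (simp add: K_def)
  with bound show "integral {2 * v..1/2} (kernel \<alpha> \<beta> v) \<le> 2 powr q * 2 powr q / \<beta> * v powr (-\<beta>)"
    unfolding K_def by simp
qed

lemma kernel_integral_le_on_half_1:
  fixes \<alpha> \<beta> v :: real
  assumes "1 < \<alpha>" "\<alpha> \<le> 2" "0 \<le> \<beta>" "0 < v" "v \<le> 1/4"
  defines "q \<equiv> 1/\<alpha>"
  shows "kernel \<alpha> \<beta> v integrable_on {1/2..1}"
    and "integral {1/2..1} (kernel \<alpha> \<beta> v) \<le> 2 powr \<beta> * 8 powr q / (1 - q)"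
proof -
  have q: "q < 1"
    using assms by (simp add: q_def)
  define K where "K = 2 powr \<beta> * 8 powr q"
  have K_int: "((\<lambda>r. K * (1 - r) powr (-q)) has_integral K * ((1/2) powr (1 - q) / (1 - q))) {1/2..1}"
    using has_integral_mult_right[OF has_integral_powr_sub_right[of "1/2" 1 q]] q by simp
  have "0 \<le> kernel \<alpha> \<beta> v r \<and> kernel \<alpha> \<beta> v r \<le> K * (1 - r) powr (-q)" if "r \<in> {1/2<..<1}" for r
    using kernel_le_on_half_1[of \<alpha> \<beta> v r] kernel_nonneg assms that unfolding K_def q_def by auto
  then have int: "kernel \<alpha> \<beta> v integrable_on {1/2..1}"
    and bound: "integral {1/2..1} (kernel \<alpha> \<beta> v) \<le> K * ((1/2) powr (1 - q) / (1 - q))"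
    using integral_le_of_continuous_dominated[OF _ continuous_on_kernel K_int] assms by auto
  show "kernel \<alpha> \<beta> v integrable_on {1/2..1}"
    by (fact int)
  have "K * (1/2) powr (1 - q) \<le> K"
    using q by (intro mult_left_le powr_le1) (auto simp: K_def)
  then have "K * ((1/2) powr (1 - q) / (1 - q)) \<le> K / (1 - q)"
    using q by (simp add: divide_right_mono)
  with bound show "integral {1/2..1} (kernel \<alpha> \<beta> v) \<le> 2 powr \<beta> * 8 powr q / (1 - q)"
    unfolding K_def by linarith
qed

lemma kernel_integral_upper_large_v:
  fixes \<alpha> \<beta> v :: real
  assumes "1 < \<alpha>" "\<alpha> \<le> 2" "0 \<le> \<beta>" "1/4 \<le> v" "v < 1"
  defines "q \<equiv> 1/\<alpha>"
  shows "kernel \<alpha> \<beta> v integrable_on {v..1}"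
    and "integral {v..1} (kernel \<alpha> \<beta> v) \<le> 2 * 4 powr q * 2 powr q / (1 - q) * weight \<alpha> \<beta> v"
proof -
  have q: "0 < q" "q < 1"
    using assms by (auto simp: q_def)
  define h where "h = (1 - v) / 2"
  define g where "g r = v powr (-\<beta>) * 4 powr q * (h powr (-q) * ((1 - r) powr (-q) + (r - v) powr (-q)))" for r
  have g_int: "(g has_integral v powr (-\<beta>) * 4 powr q * (h powr (-q) * (2 * ((1 - v) powr (1 - q) / (1 - q))))) {v..1}"
    unfolding g_def
    using has_integral_mult_right[OF has_integral_mult_right[OF has_integral_add[OF
          has_integral_powr_sub_right[of v 1 q] has_integral_powr_sub_left[of v 1 q]]]] assms q
    by simp
  have "0 \<le> kernel \<alpha> \<beta> v r \<and> kernel \<alpha> \<beta> v r \<le> g r" if r: "r \<in> {v<..<1}" for r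
  proof -
    have "((1 - r) * (r - v)) powr (-q) \<le> h powr (-q) * ((1 - r) powr (-q) + (r - v) powr (-q))"
      using mult_powr_neg_le_sum[of "1 - r" "r - v" q] r q unfolding h_def by simp
    then have "v powr (-\<beta>) * 4 powr q * ((1 - r) * (r - v)) powr (-q) \<le> g r"
      unfolding g_def by (rule mult_left_mono) simp
    then show ?thesis
      using kernel_le_large_v[of \<alpha> \<beta> v r] kernel_nonneg assms r unfolding q_def by auto
  qed
  then have int: "kernel \<alpha> \<beta> v integrable_on {v..1}"
    and bound: "integral {v..1} (kernel \<alpha> \<beta> v)
                  \<le> v powr (-\<beta>) * 4 powr q * (h powr (-q) * (2 * ((1 - v) powr (1 - q) / (1 - q))))"
    using integral_le_of_continuous_dominated[OF _ continuous_on_kernel g_int] assms by auto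
  show "kernel \<alpha> \<beta> v integrable_on {v..1}"
    by (fact int)
  have "v powr (-\<beta>) * 4 powr q * (h powr (-q) * (2 * ((1 - v) powr (1 - q) / (1 - q))))
      = 2 * 4 powr q * 2 powr q / (1 - q) * weight \<alpha> \<beta> v"
    unfolding h_def weight_eq[OF assms(5)] q_def[symmetric]
    by (simp add: powr_divide divide_powr_uminus field_simps)
  with bound show "integral {v..1} (kernel \<alpha> \<beta> v) \<le> 2 * 4 powr q * 2 powr q / (1 - q) * weight \<alpha> \<beta> v"
    by linarith
qed

lemma kernel_integral_lower_large_v:
  fixes \<alpha> \<beta> v :: real
  assumes "1 < \<alpha>" "\<alpha> \<le> 2" "0 \<le> \<beta>" "1/4 \<le> v" "v < 1"
    and "kernel \<alpha> \<beta> v integrable_on {v..1}"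
  defines "q \<equiv> 1/\<alpha>"
  shows "4 powr (-\<beta>) * 2 powr (-q) * 2 powr (-q) / (1 - q) * weight \<alpha> \<beta> v \<le> integral {v..1} (kernel \<alpha> \<beta> v)"
proof -
  have q: "q < 1"
    using assms by (simp add: q_def)
  define K where "K = (4 * v) powr (-\<beta>) * (2 * (1 - v)) powr (-q) * 2 powr (-q)"
  have "K * (r - v) powr (-q) \<le> kernel \<alpha> \<beta> v r" if "r \<in> {v<..<1}" for r
    using kernel_ge_large_v[of \<alpha> \<beta> v r] assms that unfolding K_def q_def by auto
  then have "K * ((1 - v) powr (1 - q) / (1 - q)) \<le> integral {v..1} (kernel \<alpha> \<beta> v)"
    using integral_ge_of_minorant[OF assms(6) has_integral_mult_right[OF has_integral_powr_sub_left[of v 1 q]]] assms q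
    by auto
  moreover have "K * ((1 - v) powr (1 - q) / (1 - q)) = 4 powr (-\<beta>) * 2 powr (-q) * 2 powr (-q) / (1 - q) * weight \<alpha> \<beta> v"
    unfolding K_def weight_eq[OF assms(5)] q_def[symmetric] powr_mult[of 2 "1 - v"] powr_mult[of 4 v]
    by (simp add: field_simps)
  ultimately show ?thesis
    by linarith
qed

lemma kernel_integral_upper_small_v:
  fixes \<alpha> \<beta> v :: real
  assumes "1 < \<alpha>" "\<alpha> \<le> 2" "0 < \<beta>" "0 < v" "v \<le> 1/4"
  defines "q \<equiv> 1/\<alpha>"
  shows "kernel \<alpha> \<beta> v integrable_on {v..1}"
    and "integral {v..1} (kernel \<alpha> \<beta> v)
           \<le> (2 powr q / (1 - q) + 2 powr q * 2 powr q / \<beta> + 2 powr \<beta> * 8 powr q / (1 - q)) * weight \<alpha> \<beta> v"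
proof -
  have q: "0 < q" "q < 1"
    using assms by (auto simp: q_def field_simps)
  have split: "v \<le> 2 * v" "2 * v \<le> 1/2"
    using assms by auto
  note on_v_2v = kernel_integral_le_on_v_2v[of \<alpha> \<beta> v, folded q_def]
  note on_2v_half = kernel_integral_le_on_2v_half[of \<alpha> \<beta> v, folded q_def]
  note on_half_1 = kernel_integral_le_on_half_1[of \<alpha> \<beta> v, folded q_def]
  have int_half: "kernel \<alpha> \<beta> v integrable_on {v..1/2}"
    and le_half: "integral {v..1/2} (kernel \<alpha> \<beta> v)
                    \<le> 2 powr q / (1 - q) * v powr (-\<beta>) + 2 powr q * 2 powr q / \<beta> * v powr (-\<beta>)"
    using integral_combine_le[OF split on_v_2v on_2v_half] assms by auto
  have int: "kernel \<alpha> \<beta> v integrable_on {v..1}"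
    and le_all: "integral {v..1} (kernel \<alpha> \<beta> v)
                   \<le> 2 powr q / (1 - q) * v powr (-\<beta>) + 2 powr q * 2 powr q / \<beta> * v powr (-\<beta>)
                     + 2 powr \<beta> * 8 powr q / (1 - q)"
    using integral_combine_le[of v "1/2" 1, OF _ _ int_half le_half on_half_1] assms by auto
  show "kernel \<alpha> \<beta> v integrable_on {v..1}"
    by (fact int)
  have v_ge_1: "1 \<le> v powr (-\<beta>)"
    using powr_mono2'[of "-\<beta>" v 1] assms by simp
  have "v powr (-\<beta>) \<le> weight \<alpha> \<beta> v"
    using powr_mono2'[of "1 - 2/\<alpha>" "1 - v" 1] mult_left_mono[of 1 _ "v powr (-\<beta>)"] assms
    unfolding weight_def by (simp add: field_simps)
  moreover have "2 powr \<beta> * 8 powr q / (1 - q) \<le> 2 powr \<beta> * 8 powr q / (1 - q) * v powr (-\<beta>)"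
    using mult_left_mono[OF v_ge_1, of "2 powr \<beta> * 8 powr q / (1 - q)"] q by simp
  ultimately show "integral {v..1} (kernel \<alpha> \<beta> v)
           \<le> (2 powr q / (1 - q) + 2 powr q * 2 powr q / \<beta> + 2 powr \<beta> * 8 powr q / (1 - q)) * weight \<alpha> \<beta> v"
    using le_all mult_left_mono[of "v powr (-\<beta>)" "weight \<alpha> \<beta> v"
        "2 powr q / (1 - q) + 2 powr q * 2 powr q / \<beta> + 2 powr \<beta> * 8 powr q / (1 - q)"] q assms
    by (simp add: algebra_simps)
qed

lemma kernel_integral_lower_small_v:
  fixes \<alpha> \<beta> v :: real
  assumes "1 \<le> \<alpha>" "0 < \<beta>" "0 < v" "v \<le> 1/4"
    and "kernel \<alpha> \<beta> v integrable_on {v..1}"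
  shows "(1 - 4 powr (-\<beta>)) / (2 * \<beta>) * weight \<alpha> \<beta> v \<le> integral {v..1} (kernel \<alpha> \<beta> v)"
proof -
  have "r powr (-\<beta> - 1) \<le> kernel \<alpha> \<beta> v r" if "r \<in> {v<..<1}" for r
    using powr_neg_minus_one_le_kernel[of \<alpha> v r \<beta>] assms that by auto
  then have "(v powr (-\<beta>) - 1 powr (-\<beta>)) / \<beta> \<le> integral {v..1} (kernel \<alpha> \<beta> v)"
    using integral_ge_of_minorant[OF assms(5) has_integral_powr_neg_minus_one[of v 1 \<beta>]] assms by auto
  moreover have "(1 - 4 powr (-\<beta>)) / (2 * \<beta>) * weight \<alpha> \<beta> v \<le> (v powr (-\<beta>) - 1) / \<beta>"
  proof -
    have "(1 - v) powr (1 - 2/\<alpha>) \<le> (1 - v) powr (-1)"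
      using assms by (intro powr_mono') (auto simp: field_simps)
    also have "\<dots> \<le> 2"
      using assms by (simp add: powr_minus_divide field_simps)
    finally have "(1 - v) powr (1 - 2/\<alpha>) \<le> 2" .
    then have "weight \<alpha> \<beta> v \<le> v powr (-\<beta>) * 2"
      unfolding weight_def by (simp add: mult_left_mono)
    moreover have "0 \<le> 1 - 4 powr (-\<beta>)"
      using powr_mono2'[of "-\<beta>" 1 4] assms by simp
    ultimately have "(1 - 4 powr (-\<beta>)) / (2 * \<beta>) * weight \<alpha> \<beta> v
        \<le> (1 - 4 powr (-\<beta>)) / (2 * \<beta>) * (v powr (-\<beta>) * 2)"
      using assms by (intro mult_left_mono) auto
    also have "\<dots> = (v powr (-\<beta>) - (4 * v) powr (-\<beta>)) / \<beta>"
      using assms by (simp add: powr_mult field_simps)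
    also have "\<dots> \<le> (v powr (-\<beta>) - 1) / \<beta>"
      using powr_mono2'[of "-\<beta>" "4 * v" 1] assms by (intro divide_right_mono) auto
    finally show ?thesis .
  qed
  ultimately show ?thesis
    by simp
qed

lemma kernel_integral_between_small_v:
  fixes \<alpha> \<beta> :: real
  assumes "1 < \<alpha>" "\<alpha> < 2" "0 < \<beta>"
  shows "\<exists>L>0. \<exists>U. \<forall>v\<in>{0<..<1/4}. kernel_integral_between \<alpha> \<beta> L U v"
proof (intro exI conjI ballI)
  show "0 < (1 - 4 powr (-\<beta>)) / (2 * \<beta>)"
    using powr_less_mono2_neg[of "-\<beta>" 1 4] assms by simp
  fix v :: real
  assume "v \<in> {0<..<1/4}"
  then show "kernel_integral_between \<alpha> \<beta> ((1 - 4 powr (-\<beta>)) / (2 * \<beta>))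
      (2 powr (1/\<alpha>) / (1 - 1/\<alpha>) + 2 powr (1/\<alpha>) * 2 powr (1/\<alpha>) / \<beta> + 2 powr \<beta> * 8 powr (1/\<alpha>) / (1 - 1/\<alpha>)) v"
    unfolding kernel_integral_between_def
    using kernel_integral_upper_small_v[of \<alpha> \<beta> v] kernel_integral_lower_small_v[of \<alpha> \<beta> v] assms
    by auto
qed

lemma kernel_integral_between_large_v:
  fixes \<alpha> \<beta> :: real
  assumes "1 < \<alpha>" "\<alpha> < 2" "0 < \<beta>"
  shows "\<exists>L>0. \<exists>U. \<forall>v\<in>{1/4..<1}. kernel_integral_between \<alpha> \<beta> L U v"
proof (intro exI conjI ballI)
  show "0 < 4 powr (-\<beta>) * 2 powr (-(1/\<alpha>)) * 2 powr (-(1/\<alpha>)) / (1 - 1/\<alpha>)"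
    using assms by (simp add: field_simps)
  fix v :: real
  assume "v \<in> {1/4..<1}"
  then show "kernel_integral_between \<alpha> \<beta> (4 powr (-\<beta>) * 2 powr (-(1/\<alpha>)) * 2 powr (-(1/\<alpha>)) / (1 - 1/\<alpha>))
      (2 * 4 powr (1/\<alpha>) * 2 powr (1/\<alpha>) / (1 - 1/\<alpha>)) v"
    unfolding kernel_integral_between_def
    using kernel_integral_upper_large_v[of \<alpha> \<beta> v] kernel_integral_lower_large_v[of \<alpha> \<beta> v] assms
    by auto
qed

theorem lemma4p4:
  fixes \<alpha> \<beta> :: real
  assumes "1 < \<alpha>" "\<alpha> < 2" "0 < \<beta>"
  shows "\<exists>c::real. c \<ge> 1 \<and> (\<forall>v::real. 0 < v \<and> v < 1 \<longrightarrow>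
     (\<lambda>r. r powr (-\<beta>) * (1 - r powr \<alpha>) powr (-1/\<alpha>) * (r powr \<alpha> - v powr \<alpha>) powr (-1/\<alpha>))
        integrable_on {v..1} \<and>
     (1/c) * v powr (-\<beta>) * (1 - v) powr (1 - 2/\<alpha>)
       \<le> integral {v..1} (\<lambda>r. r powr (-\<beta>) * (1 - r powr \<alpha>) powr (-1/\<alpha>) * (r powr \<alpha> - v powr \<alpha>) powr (-1/\<alpha>)) \<and>
     integral {v..1} (\<lambda>r. r powr (-\<beta>) * (1 - r powr \<alpha>) powr (-1/\<alpha>) * (r powr \<alpha> - v powr \<alpha>) powr (-1/\<alpha>))
       \<le> c * v powr (-\<beta>) * (1 - v) powr (1 - 2/\<alpha>))"
proof -
  obtain L\<^sub>0 U\<^sub>0 where "0 < L\<^sub>0" and small_v: "\<forall>v\<in>{0<..<1/4}. kernel_integral_between \<alpha> \<beta> L\<^sub>0 U\<^sub>0 v"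
    using kernel_integral_between_small_v[OF assms] by blast
  obtain L\<^sub>1 U\<^sub>1 where "0 < L\<^sub>1" and large_v: "\<forall>v\<in>{1/4..<1}. kernel_integral_between \<alpha> \<beta> L\<^sub>1 U\<^sub>1 v"
    using kernel_integral_between_large_v[OF assms] by blast
  define c where "c = Max {1, U\<^sub>0, U\<^sub>1, 1/L\<^sub>0, 1/L\<^sub>1}"
  have c: "1 \<le> c" "U\<^sub>0 \<le> c" "U\<^sub>1 \<le> c" "1/L\<^sub>0 \<le> c" "1/L\<^sub>1 \<le> c"
    unfolding c_def by auto
  have "1/c \<le> L\<^sub>0" "1/c \<le> L\<^sub>1"
    using divide_left_mono[OF c(4), of 1] divide_left_mono[OF c(5), of 1] \<open>0 < L\<^sub>0\<close> \<open>0 < L\<^sub>1\<close> c(1)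
    by simp_all
  have "kernel_integral_between \<alpha> \<beta> (1/c) c v" if "0 < v" "v < 1" for v
    using small_v large_v that c \<open>1/c \<le> L\<^sub>0\<close> \<open>1/c \<le> L\<^sub>1\<close>
    by (cases "v < 1/4") (auto intro: kernel_integral_between_mono)
  then show ?thesis
    using c(1) unfolding kernel_integral_between_def kernel_def weight_def
    by (auto simp: mult.assoc)
qed

end
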